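(* Let $\Delta x>0$, let $a=(a_j)_{j\in\mathbb Z}$ be a sequence in $\ell^2_\Delta(\mathbb Z)$ and $\gamma\in[0,\frac12)$. Then $$\Big\langle D_+D_+D_-(a),D\Big(\frac{a^2}{2}\Big)\Big\rangle\le\frac{\Delta x^{\frac12-\gamma}+\|a\|_{\ell^\infty}+9\|a\|^2_{\ell^\infty}\Delta x^{\gamma-\frac12}}{2}\|D_+D_-(a)\|^2_{\ell^2_\Delta}+\|a\|_{\ell^\infty}\|D_+D(a)\|^2_{\ell^2_\Delta}.$$
   Context: For sequences: $D_+(a)_j=(a_{j+1}-a_j)/\Delta x$, $D_-(a)_j=(a_j-a_{j-1})/\Delta x$, $D=\frac12(D_++D_-)$; $a^2$ is componentwise; $\langle a,b\rangle=\Delta x\sum_ja_jb_j$, $\|a\|_{\ell^2_\Delta}=\langle a,a\rangle^{1/2}$, $\|a\|_{\ell^\infty}=\sup_j|a_j|$. *)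

theory Defs
  imports "HOL-Analysis.Analysis"
begin

definition Dp :: "real \<Rightarrow> (int \<Rightarrow> real) \<Rightarrow> (int \<Rightarrow> real)" where
  "Dp dx a = (\<lambda>j. (a (j + 1) - a j) / dx)"

definition Dm :: "real \<Rightarrow> (int \<Rightarrow> real) \<Rightarrow> (int \<Rightarrow> real)" where
  "Dm dx a = (\<lambda>j. (a j - a (j - 1)) / dx)"

definition Dc :: "real \<Rightarrow> (int \<Rightarrow> real) \<Rightarrow> (int \<Rightarrow> real)" where
  "Dc dx a = (\<lambda>j. (Dp dx a j + Dm dx a j) / 2)"

definition inner_d :: "real \<Rightarrow> (int \<Rightarrow> real) \<Rightarrow> (int \<Rightarrow> real) \<Rightarrow> real" where
  "inner_d dx a b = dx * (\<Sum>\<^sub>\<infinity>j\<in>UNIV. a j * b j)"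

definition norm_l2d :: "real \<Rightarrow> (int \<Rightarrow> real) \<Rightarrow> real" where
  "norm_l2d dx a = sqrt (inner_d dx a a)"

definition norm_linf :: "(int \<Rightarrow> real) \<Rightarrow> real" where
  "norm_linf a = (SUP j. \<bar>a j\<bar>)"

definition in_l2d :: "(int \<Rightarrow> real) \<Rightarrow> bool" where
  "in_l2d a \<longleftrightarrow> (\<lambda>j. (a j)\<^sup>2) summable_on UNIV"

end

theory Submission
  imports Defs
begin

text \<open>
  The three difference operators scale with powers of \<open>dx\<close>, so both sides of the inequality are
  \<open>dx\<^sup>-\<^sup>3\<close> times their values at unit mesh. At unit mesh, with \<open>M = \<parallel>a\<parallel>\<^sub>\<infinity>\<close>, each summand of the
  inner product is bounded by \<open>11/6 M b\<^sub>j\<^sup>2 + M/2 e\<^sub>j\<^sup>2\<close> (where \<open>b = D\<^sub>+D\<^sub>-a\<close>, \<open>e = D\<^sub>+Da\<close>) plus a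
  discrete divergence \<open>H\<^sub>j - H\<^sub>j\<^sub>-\<^sub>1\<close>; the flux \<open>H\<close> absorbs the exactly telescoping part of the
  product, including the cubic term \<open>(D\<^sub>+a)\<^sup>3/3\<close> produced by the nonlinearity. Summed over \<open>\<int>\<close> the
  divergence vanishes, and AM-GM in the form \<open>t + 9M\<^sup>2/t \<ge> 6M\<close> with \<open>t = dx\<^bsup>1/2-\<gamma>\<^esup>\<close> shows that
  \<open>11/6 M\<close> is below the coefficient \<open>(t + M + 9M\<^sup>2/t)/2\<close>.
\<close>

lemma mult_le_bound_sum_squares:
  fixes x y s K :: real
  assumes "\<bar>s\<bar> \<le> K"
  shows "x * y * s \<le> K * (x\<^sup>2 + y\<^sup>2) / 2"
proof -
  have "x * y * s \<le> \<bar>x * y\<bar> * K"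
    using mult_left_mono[OF assms abs_ge_zero, of "x * y"] abs_mult abs_ge_self
    by (metis abs_mult order_trans)
  also have "\<dots> \<le> (x\<^sup>2 + y\<^sup>2) / 2 * K"
    using sum_squares_bound[of "\<bar>x\<bar>" "\<bar>y\<bar>"] assms
    by (intro mult_right_mono) (auto simp: abs_mult)
  finally show ?thesis by (simp add: mult.commute)
qed

lemma five_point_inequality:
  fixes x0 x1 x2 x3 x4 M :: real
  assumes "\<bar>x0\<bar> \<le> M" "\<bar>x1\<bar> \<le> M" "\<bar>x2\<bar> \<le> M" "\<bar>x3\<bar> \<le> M" "\<bar>x4\<bar> \<le> M"
  defines "b0 \<equiv> x2 - 2*x1 + x0" and "b \<equiv> x3 - 2*x2 + x1" and "b1 \<equiv> x4 - 2*x3 + x2"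
    and "c0 \<equiv> (x2\<^sup>2 - x0\<^sup>2)/4" and "c \<equiv> (x3\<^sup>2 - x1\<^sup>2)/4"
    and "e0 \<equiv> (x3 - x2 - x1 + x0)/2" and "e \<equiv> (x4 - x3 - x2 + x1)/2"
    and "p0 \<equiv> x2 - x1" and "p \<equiv> x3 - x2"
  shows "(b1 - b) * c \<le> 11/6*M*b\<^sup>2 + M/2*e\<^sup>2
     + ((b1 * c - p^3/3 - M/4*b\<^sup>2 - M/2*e\<^sup>2) - (b * c0 - p0^3/3 - M/4*b0\<^sup>2 - M/2*e0\<^sup>2))"
proof -
  \<comment> \<open>After removing the telescoping part, what remains are cubic terms of the form
    (second difference) \<open>\<times>\<close> (second difference) \<open>\<times>\<close> (a factor bounded by a multiple of \<open>M\<close>).\<close>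
  have "(b1 - b) * c = (b1 * c - b * c0) - (p^3 - p0^3)/3
      + (b * b * (-(x3 + 2*x2 + x1)) + b * b0 * (-(x2 + 2*x1 + x0))) / 8
      + b * b * b / 12 + b * e0 * ((x3 - x1)/2 + (x2 - x0)/2) / 2"
    unfolding b_def b1_def b0_def c_def c0_def e0_def p_def p0_def
    by (simp add: field_simps power2_eq_square power3_eq_cube)
  moreover have "b * b * (-(x3 + 2*x2 + x1)) \<le> 4*M * (b\<^sup>2 + b\<^sup>2) / 2"
    using assms(2-4) by (intro mult_le_bound_sum_squares) arith
  moreover have "b * b0 * (-(x2 + 2*x1 + x0)) \<le> 4*M * (b\<^sup>2 + b0\<^sup>2) / 2"
    using assms(1-3) by (intro mult_le_bound_sum_squares) arith
  moreover have "b * b * b \<le> 4*M * (b\<^sup>2 + b\<^sup>2) / 2"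
    using assms(2-4) unfolding b_def by (intro mult_le_bound_sum_squares) arith
  moreover have "b * e0 * ((x3 - x1)/2 + (x2 - x0)/2) \<le> 2*M * (b\<^sup>2 + e0\<^sup>2) / 2"
    using assms(1-4) by (intro mult_le_bound_sum_squares) (simp add: abs_le_iff field_simps; arith)
  ultimately show ?thesis by (simp add: field_simps)
qed

lemma summable_on_diff:
  fixes f g :: "'a \<Rightarrow> 'b::topological_ab_group_add"
  assumes "f summable_on A" "g summable_on A"
  shows "(\<lambda>x. f x - g x) summable_on A"
  using summable_on_add[OF assms(1), of "\<lambda>x. - g x"] assms(2) summable_on_uminus[of g A]
  by simp

lemma infsum_le_telescoping:
  fixes F G H :: "int \<Rightarrow> real"
  assumes "F summable_on UNIV" "G summable_on UNIV" "H summable_on UNIV"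
    and "\<And>j. F j \<le> G j + (H j - H (j - 1))"
  shows "infsum F UNIV \<le> infsum G UNIV"
proof -
  have "bij_betw (\<lambda>j::int. j - 1) UNIV UNIV"
    by (rule bij_betwI[where g="\<lambda>j. j + 1"]) auto
  then have "((\<lambda>j. - H (j - 1)) has_sum - infsum H UNIV) UNIV"
    using has_sum_reindex_bij_betw[of "\<lambda>j. j - 1" UNIV UNIV H] assms(3)
    by (simp add: has_sum_uminus)
  then have "((\<lambda>j. G j + (H j + - H (j - 1))) has_sum
      infsum G UNIV + (infsum H UNIV + - infsum H UNIV)) UNIV"
    using assms(2,3) by (intro has_sum_add) simp_all
  then show ?thesis
    using assms(1,4) by (intro has_sum_mono[OF has_sum_infsum]) simp_all
qed

lemma in_l2d_shift:
  assumes "in_l2d a"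
  shows "in_l2d (\<lambda>j. a (j + k))"
proof -
  have "bij_betw (\<lambda>j::int. j + k) UNIV UNIV"
    by (rule bij_betwI[where g="\<lambda>j. j - k"]) auto
  then show ?thesis
    using assms unfolding in_l2d_def
    using summable_on_reindex_bij_betw[of "\<lambda>j. j + k" UNIV UNIV "\<lambda>j. (a j)\<^sup>2"] by simp
qed

lemma summable_on_mult_in_l2d:
  assumes "in_l2d f" "in_l2d g"
  shows "(\<lambda>j. f j * g j) summable_on UNIV"
proof -
  have "(\<lambda>j. norm (f j * f j)) summable_on UNIV" "(\<lambda>j. norm (g j * g j)) summable_on UNIV"
    using assms unfolding in_l2d_def summable_on_iff_abs_summable_on_real[symmetric]
    by (simp_all add: power2_eq_square)
  then have "(\<lambda>j. norm (f j * g j)) summable_on UNIV"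
    by (rule abs_summable_product)
  then show ?thesis
    using summable_on_iff_abs_summable_on_real by blast
qed

lemma summable_on_cmult_power2: "in_l2d f \<Longrightarrow> (\<lambda>j. k * (f j)\<^sup>2) summable_on UNIV"
  unfolding in_l2d_def by (rule summable_on_cmult_right)

lemma in_l2d_cmult: "in_l2d f \<Longrightarrow> in_l2d (\<lambda>j. c * f j)"
  unfolding in_l2d_def using summable_on_cmult_right[of "\<lambda>j. (f j)\<^sup>2" UNIV "c\<^sup>2"]
  by (simp add: power_mult_distrib)

lemma in_l2d_divide: "in_l2d f \<Longrightarrow> in_l2d (\<lambda>j. f j / c)"
  using in_l2d_cmult[of f "inverse c"] by (simp add: divide_inverse mult.commute)

lemma in_l2d_add:
  assumes "in_l2d f" "in_l2d g"
  shows "in_l2d (\<lambda>j. f j + g j)"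
proof -
  have "(\<lambda>j. (f j)\<^sup>2 + (2 * (f j * g j) + (g j)\<^sup>2)) summable_on UNIV"
    using assms summable_on_mult_in_l2d[OF assms] unfolding in_l2d_def
    by (intro summable_on_add summable_on_cmult_right)
  then show ?thesis
    unfolding in_l2d_def by (simp add: power2_sum algebra_simps)
qed

lemma in_l2d_diff: "in_l2d f \<Longrightarrow> in_l2d g \<Longrightarrow> in_l2d (\<lambda>j. f j - g j)"
  using in_l2d_add[of f "\<lambda>j. -1 * g j"] in_l2d_cmult[of g "-1"] by simp

lemma in_l2d_bounded_mult:
  assumes "in_l2d f" and "\<And>j. \<bar>g j\<bar> \<le> K"
  shows "in_l2d (\<lambda>j. g j * f j)"
  unfolding in_l2d_def
proof (rule summable_on_comparison_test)
  show "(\<lambda>j. K\<^sup>2 * (f j)\<^sup>2) summable_on UNIV"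
    using assms(1) unfolding in_l2d_def by (rule summable_on_cmult_right)
  fix j
  have "(g j)\<^sup>2 \<le> K\<^sup>2"
    using power_mono[OF assms(2)[of j] abs_ge_zero, of 2] by simp
  then show "(g j * f j)\<^sup>2 \<le> K\<^sup>2 * (f j)\<^sup>2"
    by (simp add: power_mult_distrib mult_right_mono)
qed simp

lemma abs_le_norm_linf:
  assumes "in_l2d a"
  shows "\<bar>a j\<bar> \<le> norm_linf a"
proof -
  have "(a i)\<^sup>2 \<le> infsum (\<lambda>j. (a j)\<^sup>2) UNIV" for i
    using infsum_mono_neutral[of "\<lambda>j. (a j)\<^sup>2" "{i}" "\<lambda>j. (a j)\<^sup>2" UNIV] assms
    unfolding in_l2d_def by simp
  then have "\<bar>a i\<bar> \<le> sqrt (infsum (\<lambda>j. (a j)\<^sup>2) UNIV)" for i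
    using real_sqrt_le_mono by fastforce
  then have "bdd_above (range (\<lambda>j. \<bar>a j\<bar>))"
    by (auto intro: bdd_aboveI[where M="sqrt (infsum (\<lambda>j. (a j)\<^sup>2) UNIV)"])
  then show ?thesis
    unfolding norm_linf_def by (rule cSUP_upper[rotated]) simp
qed

lemma in_l2d_half_square: "in_l2d a \<Longrightarrow> in_l2d (\<lambda>j. (a j)\<^sup>2 / 2)"
  using in_l2d_bounded_mult[of a "\<lambda>j. a j / 2" "norm_linf a / 2"] abs_le_norm_linf[of a]
  by (simp add: power2_eq_square)

lemma in_l2d_Dp: "in_l2d a \<Longrightarrow> in_l2d (Dp dx a)"
  unfolding Dp_def by (intro in_l2d_divide in_l2d_diff in_l2d_shift)

lemma in_l2d_Dm: "in_l2d a \<Longrightarrow> in_l2d (Dm dx a)"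
  unfolding Dm_def using in_l2d_shift[of a "-1"] by (intro in_l2d_divide in_l2d_diff) simp_all

lemma in_l2d_Dc: "in_l2d a \<Longrightarrow> in_l2d (Dc dx a)"
  unfolding Dc_def by (intro in_l2d_divide in_l2d_add in_l2d_Dp in_l2d_Dm)

lemma Dp_Dm_unit_mesh:
  assumes "dx \<noteq> 0"
  shows "Dp dx (Dm dx a) = (\<lambda>j. Dp 1 (Dm 1 a) j / dx\<^sup>2)"
  by (rule ext) (simp add: Dp_def Dm_def assms field_simps power2_eq_square)

lemma Dp_Dp_Dm_unit_mesh:
  assumes "dx \<noteq> 0"
  shows "Dp dx (Dp dx (Dm dx a)) = (\<lambda>j. Dp 1 (Dp 1 (Dm 1 a)) j / dx ^ 3)"
  by (rule ext) (simp add: Dp_def Dm_def assms field_simps power3_eq_cube)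

lemma Dc_unit_mesh:
  assumes "dx \<noteq> 0"
  shows "Dc dx a = (\<lambda>j. Dc 1 a j / dx)"
  by (rule ext) (simp add: Dc_def Dp_def Dm_def assms field_simps)

lemma Dp_Dc_unit_mesh:
  assumes "dx \<noteq> 0"
  shows "Dp dx (Dc dx a) = (\<lambda>j. Dp 1 (Dc 1 a) j / dx\<^sup>2)"
  by (rule ext) (simp add: Dc_def Dp_def Dm_def assms field_simps power2_eq_square)

lemma inner_d_divide:
  "inner_d dx (\<lambda>j. f j / c) (\<lambda>j. g j / d) = dx / (c * d) * inner_d 1 f g"
proof -
  have "(\<lambda>j. f j / c * (g j / d)) = (\<lambda>j. inverse (c * d) * (f j * g j))"
    by (simp add: field_simps)
  then show ?thesis
    unfolding inner_d_def by (simp only: infsum_cmult_right') (simp add: field_simps)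
qed

lemma power2_norm_l2d: "0 \<le> dx \<Longrightarrow> (norm_l2d dx f)\<^sup>2 = inner_d dx f f"
  unfolding norm_l2d_def inner_d_def by (simp add: infsum_nonneg)

lemma norm_l2d_divide:
  assumes "0 \<le> dx"
  shows "(norm_l2d dx (\<lambda>j. f j / c))\<^sup>2 = dx / c\<^sup>2 * (norm_l2d 1 f)\<^sup>2"
  unfolding power2_norm_l2d[OF assms] power2_norm_l2d[of 1, simplified] inner_d_divide
  by (simp add: power2_eq_square)

definition energy_flux :: "real \<Rightarrow> (int \<Rightarrow> real) \<Rightarrow> int \<Rightarrow> real" where
  "energy_flux M a j = Dp 1 (Dm 1 a) (j + 1) * Dc 1 (\<lambda>j. (a j)\<^sup>2 / 2) j - (Dp 1 a j)^3/3
     - M/4 * (Dp 1 (Dm 1 a) j)\<^sup>2 - M/2 * (Dp 1 (Dc 1 a) j)\<^sup>2"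

lemma local_energy_inequality:
  assumes "\<And>j. \<bar>a j\<bar> \<le> M"
  shows "Dp 1 (Dp 1 (Dm 1 a)) j * Dc 1 (\<lambda>j. (a j)\<^sup>2 / 2) j
     \<le> 11/6 * M * (Dp 1 (Dm 1 a) j)\<^sup>2 + M/2 * (Dp 1 (Dc 1 a) j)\<^sup>2
       + (energy_flux M a j - energy_flux M a (j - 1))"
proof -
  have "j - 1 + 1 = j" by simp
  moreover have
    "Dp 1 (Dp 1 (Dm 1 a)) j = Dp 1 (Dm 1 a) (j + 1) - Dp 1 (Dm 1 a) j"
    "Dp 1 (Dm 1 a) (j + 1) = a (j + 2) - 2 * a (j + 1) + a j"
    "Dp 1 (Dm 1 a) j = a (j + 1) - 2 * a j + a (j - 1)"
    "Dp 1 (Dm 1 a) (j - 1) = a j - 2 * a (j - 1) + a (j - 2)"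
    "Dc 1 (\<lambda>j. (a j)\<^sup>2 / 2) j = ((a (j + 1))\<^sup>2 - (a (j - 1))\<^sup>2) / 4"
    "Dc 1 (\<lambda>j. (a j)\<^sup>2 / 2) (j - 1) = ((a j)\<^sup>2 - (a (j - 2))\<^sup>2) / 4"
    "Dp 1 (Dc 1 a) j = (a (j + 2) - a (j + 1) - a j + a (j - 1)) / 2"
    "Dp 1 (Dc 1 a) (j - 1) = (a (j + 1) - a j - a (j - 1) + a (j - 2)) / 2"
    "Dp 1 a j = a (j + 1) - a j"
    "Dp 1 a (j - 1) = a j - a (j - 1)"
    unfolding Dp_def Dm_def Dc_def by (simp_all add: field_simps)
  ultimately show ?thesis
    unfolding energy_flux_def by (simp only:) (intro five_point_inequality assms)
qed

lemma summable_energy_flux: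
  assumes a: "in_l2d a" and bound: "\<And>j. \<bar>a j\<bar> \<le> M"
  shows "energy_flux M a summable_on UNIV"
proof -
  have "in_l2d (Dc 1 (\<lambda>j. (a j)\<^sup>2 / 2))"
    using a by (intro in_l2d_Dc in_l2d_half_square)
  then have "(\<lambda>j. Dp 1 (Dm 1 a) (j + 1) * Dc 1 (\<lambda>j. (a j)\<^sup>2 / 2) j) summable_on UNIV"
    using a by (intro summable_on_mult_in_l2d in_l2d_shift in_l2d_Dp in_l2d_Dm)
  moreover have "in_l2d (\<lambda>j. Dp 1 a j * Dp 1 a j)"
  proof (rule in_l2d_bounded_mult[OF in_l2d_Dp[OF a]])
    show "\<bar>Dp 1 a j\<bar> \<le> 2 * M" for j
      using bound[of "j + 1"] bound[of j] unfolding Dp_def by simp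
  qed
  then have "(\<lambda>j. (Dp 1 a j)^3 / 3) summable_on UNIV"
    using summable_on_cmult_right[OF summable_on_mult_in_l2d[OF in_l2d_Dp[OF a]], of _ "1/3"]
    by (simp add: power3_eq_cube mult.assoc)
  moreover have "(\<lambda>j. k * (Dp 1 (Dm 1 a) j)\<^sup>2) summable_on UNIV"
      "(\<lambda>j. k * (Dp 1 (Dc 1 a) j)\<^sup>2) summable_on UNIV" for k
    using a by (simp_all add: summable_on_cmult_power2 in_l2d_Dp in_l2d_Dm in_l2d_Dc)
  ultimately show ?thesis
    unfolding energy_flux_def by (intro summable_on_diff)
qed

lemma unit_mesh_estimate:
  assumes a: "in_l2d a" and bound: "\<And>j. \<bar>a j\<bar> \<le> M"
  shows "inner_d 1 (Dp 1 (Dp 1 (Dm 1 a))) (Dc 1 (\<lambda>j. (a j)\<^sup>2 / 2))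
     \<le> 11/6 * M * (norm_l2d 1 (Dp 1 (Dm 1 a)))\<^sup>2 + M/2 * (norm_l2d 1 (Dp 1 (Dc 1 a)))\<^sup>2"
proof -
  define b where "b = Dp 1 (Dm 1 a)"
  define e where "e = Dp 1 (Dc 1 a)"
  define G where "G j = 11/6*M*(b j)\<^sup>2 + M/2*(e j)\<^sup>2" for j
  have squares: "(\<lambda>j. k * (b j)\<^sup>2) summable_on UNIV" "(\<lambda>j. k * (e j)\<^sup>2) summable_on UNIV" for k
    using a unfolding b_def e_def
    by (simp_all add: summable_on_cmult_power2 in_l2d_Dp in_l2d_Dm in_l2d_Dc)
  have "in_l2d (Dc 1 (\<lambda>j. (a j)\<^sup>2 / 2))"
    using a by (intro in_l2d_Dc in_l2d_half_square)
  then have "infsum (\<lambda>j. Dp 1 b j * Dc 1 (\<lambda>j. (a j)\<^sup>2 / 2) j) UNIV \<le> infsum G UNIV"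
    using local_energy_inequality[OF bound] a
    unfolding G_def b_def e_def
    by (intro infsum_le_telescoping[OF _ _ summable_energy_flux[OF a bound]]
        summable_on_mult_in_l2d in_l2d_Dp in_l2d_Dm summable_on_add squares[unfolded b_def e_def])
  also have "\<dots> = 11/6*M * infsum (\<lambda>j. (b j)\<^sup>2) UNIV + M/2 * infsum (\<lambda>j. (e j)\<^sup>2) UNIV"
    unfolding G_def by (simp only: infsum_add squares infsum_cmult_right')
  finally show ?thesis
    unfolding b_def e_def power2_norm_l2d[of 1, simplified] inner_d_def
    by (simp add: power2_eq_square)
qed

lemma six_mult_le_add_square_divide:
  fixes t M :: real
  assumes "0 < t"
  shows "6 * M \<le> t + 9 * M\<^sup>2 / t"
proof -
  have "6 * M * t \<le> t * t + 9 * M\<^sup>2"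
    using zero_le_power2[of "t - 3 * M"] by (simp add: power2_eq_square algebra_simps)
  then show ?thesis
    using assms by (simp add: field_simps power2_eq_square)
qed

theorem lemma10:
  fixes dx \<gamma> :: real and a :: "int \<Rightarrow> real"
  assumes "dx > 0" and "in_l2d a" and "0 \<le> \<gamma>" and "\<gamma> < 1/2"
  shows "inner_d dx (Dp dx (Dp dx (Dm dx a))) (Dc dx (\<lambda>j. (a j)\<^sup>2 / 2))
     \<le> (dx powr (1/2 - \<gamma>) + norm_linf a + 9 * (norm_linf a)\<^sup>2 * dx powr (\<gamma> - 1/2)) / 2
          * (norm_l2d dx (Dp dx (Dm dx a)))\<^sup>2
       + norm_linf a * (norm_l2d dx (Dp dx (Dc dx a)))\<^sup>2"
proof -
  define M where "M = norm_linf a"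
  define t where "t = dx powr (1/2 - \<gamma>)"
  define Sb where "Sb = (norm_l2d 1 (Dp 1 (Dm 1 a)))\<^sup>2"
  define Se where "Se = (norm_l2d 1 (Dp 1 (Dc 1 a)))\<^sup>2"
  have bound: "\<bar>a j\<bar> \<le> M" for j
    unfolding M_def using assms(2) by (rule abs_le_norm_linf)
  have "0 \<le> M" "0 < t" "0 \<le> Sb" "0 \<le> Se"
    using bound[of 0] assms(1) by (auto simp: t_def Sb_def Se_def)
  have "dx \<noteq> 0" using assms(1) by simp
  have "inner_d dx (Dp dx (Dp dx (Dm dx a))) (Dc dx (\<lambda>j. (a j)\<^sup>2 / 2))
      \<le> 1 / dx ^ 3 * (11/6 * M * Sb + M/2 * Se)"
    using unit_mesh_estimate[OF assms(2) bound] assms(1)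
    unfolding Dp_Dp_Dm_unit_mesh[OF \<open>dx \<noteq> 0\<close>] Dc_unit_mesh[OF \<open>dx \<noteq> 0\<close>] inner_d_divide
      Sb_def Se_def
    by (simp add: field_simps power3_eq_cube)
  also have "\<dots> \<le> 1 / dx ^ 3 * ((t + M + 9 * M\<^sup>2 / t) / 2 * Sb + M * Se)"
    using six_mult_le_add_square_divide[OF \<open>0 < t\<close>, of M] \<open>0 \<le> M\<close> \<open>0 \<le> Sb\<close> \<open>0 \<le> Se\<close> assms(1)
    by (intro mult_left_mono add_mono mult_right_mono) auto
  also have "\<dots> = (t + M + 9 * M\<^sup>2 * dx powr (\<gamma> - 1/2)) / 2 * (norm_l2d dx (Dp dx (Dm dx a)))\<^sup>2
      + M * (norm_l2d dx (Dp dx (Dc dx a)))\<^sup>2"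
    using assms(1)
    unfolding Dp_Dm_unit_mesh[OF \<open>dx \<noteq> 0\<close>] Dp_Dc_unit_mesh[OF \<open>dx \<noteq> 0\<close>]
      norm_l2d_divide[OF less_imp_le[OF assms(1)]] Sb_def Se_def t_def powr_minus_divide[of dx "1/2 - \<gamma>", simplified]
    by (simp add: field_simps power2_eq_square power3_eq_cube)
  finally show ?thesis
    unfolding M_def t_def .
qed

end
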